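(* Let $(X,d,\mu)$, $p$, $\underline{Q}_\mu$ be as in the context, let $\theta_2\in(0,\min\{p,\underline{Q}_\mu\})$ and let $S^2\in\mathcal{ADR}_{\theta_2}(X)$ be a closed set. Then for each $c\ge1$ there is a constant $C>0$ such that whenever $\{B_{r_i}(x_i)\}_{i=1}^{M}$, $M\in\mathbb N$, is an $(S^2,c)$-nice family with $\max_i8cr_i\le1$, then for every $f\in L_p(\mathcal H_{\theta_2}\lfloor_{S^2})$, $$\sum_{i=1}^{M}\frac{\mu(B_{r_i}(x_i))}{r_i^p}\Big(\mathcal E_{\mathcal H_{\theta_2}\lfloor_{S^2}}(f,B_{2cr_i}(x_i))\Big)^p\le C\|f|\mathrm B^{1-\theta_2/p}_p(S^2)\|^p.$$
   Context: Standing setting: $(X,d)$ complete separable metric space, $\mu$ a Borel regular locally finite outer measure, $\operatorname{supp}\mu=X$, uniformly locally doubling (for every $R>0$, $\sup_{r\in(0,R]}\sup_x\mu(B_{2r}(x))/\mu(B_r(x))<\infty$). Balls are closed, $B_r(x)=\{y:d(x,y)\le r\}$, $B_k(x)=B_{2^{-k}}(x)$. A fixed $p\in(1,\infty)$; $X$ supports a weak local $(1,p)$-Poincaré inequality (for every $R>0$ there are $C,\lambda\ge1$ with $\inf_c\frac{1}{\mu(B_r(x))}\int_{B_r(x)}|f-c|d\mu\le Cr(\frac{1}{\mu(B_{\lambda r}(x))}\int_{B_{\lambda r}(x)}(\operatorname{lip}f)^pd\mu)^{1/p}$ for Lipschitz $f$, $x\in X$, $r\in(0,R]$). $\underline{Q}_\mu$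 is the infimum of $Q>0$ such that for every $R>0$ there is $C$ with $(r_{B'}/r_B)^Q\le C\mu(B')/\mu(B)$ for balls $B'\subset B$, $0<r_{B'}\le r_B\le R$. Notation: $\mathcal E_{\mathfrak m}(g,G):=\inf_{c\in\mathbb R}\mathfrak m(G)^{-1}\int_G|g-c|d\mathfrak m$ if $\mathfrak m(G)>0$, $0$ otherwise; $\mathfrak m\lfloor_S(E)=\mathfrak m(E\cap S)$. $\mathcal H_{\vartheta,\delta}(E):=\inf\{\sum\mu(B_{r_i}(x_i))r_i^{-\vartheta}:E\subset\bigcup B_{r_i}(x_i),0<r_i<\delta\}$, $\mathcal H_\vartheta=\lim_{\delta\to0}\mathcal H_{\vartheta,\delta}$. $\mathcal{ADR}_\vartheta(X)$: closed $S'$ with $\varkappa_1\mu(B_r(x))r^{-\vartheta}\le\mathcal H_\vartheta(B_r(x)\cap S')\le\varkappa_2\mu(B_r(x))r^{-\vartheta}$ for $x\in S'$, $r\in(0,1]$. Besov norm: $\|f|\mathrm B^s_p(S^2)\|:=\|f|L_p(\mathcal H_{\theta_2}\lfloor_{S^2})\|+(\sum_{k\ge1}2^{ksp}\int_{S^2}(\mathcal E_{\mathcal H_{\theta_2}\lfloor_{S^2}}(f,B_k(x)))^pd\mathcal H_{\theta_2}(x))^{1/p}$. A finite family of closed balls $\{B_{r_i}(x_i)\}$ is $(S^2,c)$-nice if the balls are pairwise disjoint, $\max_ir_i\le1$, and $B_{cr_i}(x_i)\cap S^2\ne\emptyset$ for all $i$. *)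

theory Defs
  imports "HOL-Analysis.Analysis"
begin

text \<open>Real powers of extended nonnegative reals (used only with positive exponents).\<close>
definition epow :: "ennreal \<Rightarrow> real \<Rightarrow> ennreal" where
  "epow x q = (if x = top then top else ennreal (enn2real x powr q))"

definition osc :: "'a measure \<Rightarrow> ('a \<Rightarrow> real) \<Rightarrow> 'a set \<Rightarrow> ennreal" where
  "osc m g G = (if emeasure m G > 0
      then (INF c::real. (\<integral>\<^sup>+ y\<in>G. ennreal \<bar>g y - c\<bar> \<partial>m) / emeasure m G)
      else 0)"

definition lip :: "('a::metric_space \<Rightarrow> real) \<Rightarrow> 'a \<Rightarrow> ennreal" where
  "lip f x = Liminf (at_right 0) (\<lambda>r::real. (SUP y\<in>cball x r. ennreal (\<bar>f y - f x\<bar> / r)))"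

definition lipschitz_fun :: "('a::metric_space \<Rightarrow> real) \<Rightarrow> bool" where
  "lipschitz_fun f \<longleftrightarrow> (\<exists>L. \<forall>x y. \<bar>f x - f y\<bar> \<le> L * dist x y)"

text \<open>Standing assumptions on (X,d,mu) and p. X is the whole type (complete separable metric
  space = polish_space); mu is given through its values on Borel sets (Borel regular).\<close>
definition standing_setting :: "'a::polish_space measure \<Rightarrow> real \<Rightarrow> bool" where
  "standing_setting mu p \<longleftrightarrow>
     sets mu = sets borel \<and>
     (\<forall>x. \<exists>e>0. emeasure mu (cball x e) < \<infinity>) \<and>
     (\<forall>x. \<forall>r>0. emeasure mu (cball x r) > 0) \<and>
     (\<forall>R>0. \<exists>C. \<forall>r. 0 < r \<and> r \<le> R \<longrightarrow>
        (\<forall>x. emeasure mu (cball x (2*r)) \<le> ennreal C * emeasure mu (cball x r))) \<and>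
     1 < p \<and>
     (\<forall>R>0. \<exists>C lam. C \<ge> 1 \<and> lam \<ge> 1 \<and>
        (\<forall>f x r. lipschitz_fun f \<and> 0 < r \<and> r \<le> R \<longrightarrow>
           osc mu f (cball x r) \<le> ennreal (C * r) *
             epow ((\<integral>\<^sup>+ y\<in>cball x (lam*r). epow (lip f y) p \<partial>mu) / emeasure mu (cball x (lam*r)))
                  (1/p)))"

definition Qlow :: "'a::metric_space measure \<Rightarrow> real" where
  "Qlow mu = Inf {Q. Q > 0 \<and> (\<forall>R>0. \<exists>C. \<forall>x x' r r'.
       cball x' r' \<subseteq> cball x r \<and> 0 < r' \<and> r' \<le> r \<and> r \<le> R \<longrightarrow>
       ennreal ((r'/r) powr Q) * emeasure mu (cball x r) \<le> ennreal C * emeasure mu (cball x' r'))}"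

definition Hdelta :: "'a::metric_space measure \<Rightarrow> real \<Rightarrow> real \<Rightarrow> 'a set \<Rightarrow> ennreal" where
  "Hdelta mu th \<delta> E = (INF cov \<in> {(I, x, r). (\<forall>i\<in>I. 0 < r i \<and> r i < \<delta>) \<and>
         E \<subseteq> (\<Union>i\<in>I. cball (x i) (r i))}.
       (case cov of (I, x, r) \<Rightarrow>
          (\<Sum>i. if i \<in> (I::nat set) then emeasure mu (cball (x i) (r i)) * ennreal (r i powr (-th)) else 0)))"

definition Hcod :: "'a::metric_space measure \<Rightarrow> real \<Rightarrow> 'a set \<Rightarrow> ennreal" where
  "Hcod mu th E = (SUP \<delta>\<in>{0<..}. Hdelta mu th \<delta> E)"

definition Hrestr :: "'a::metric_space measure \<Rightarrow> real \<Rightarrow> 'a set \<Rightarrow> 'a measure" where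
  "Hrestr mu th S = measure_of UNIV (sets borel) (\<lambda>A. Hcod mu th (A \<inter> S))"

definition ADR :: "'a::metric_space measure \<Rightarrow> real \<Rightarrow> 'a set set" where
  "ADR mu th = {S. closed S \<and> (\<exists>k1 k2. k1 > 0 \<and> k2 > 0 \<and>
      (\<forall>x\<in>S. \<forall>r. 0 < r \<and> r \<le> 1 \<longrightarrow>
         ennreal k1 * emeasure mu (cball x r) * ennreal (r powr (-th)) \<le> Hcod mu th (cball x r \<inter> S) \<and>
         Hcod mu th (cball x r \<inter> S) \<le> ennreal k2 * emeasure mu (cball x r) * ennreal (r powr (-th))))}"

definition in_Lp :: "'a measure \<Rightarrow> real \<Rightarrow> ('a \<Rightarrow> real) \<Rightarrow> bool" where
  "in_Lp m p f \<longleftrightarrow> f \<in> borel_measurable m \<and> (\<integral>\<^sup>+ x. ennreal (\<bar>f x\<bar> powr p) \<partial>m) < \<infinity>"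

definition besov_norm :: "'a::metric_space measure \<Rightarrow> real \<Rightarrow> 'a set \<Rightarrow> real \<Rightarrow> real \<Rightarrow> ('a \<Rightarrow> real) \<Rightarrow> ennreal" where
  "besov_norm mu th S s p f =
     epow (\<integral>\<^sup>+ x. ennreal (\<bar>f x\<bar> powr p) \<partial>Hrestr mu th S) (1/p) +
     epow (\<Sum>k. ennreal (2 powr (real (Suc k) * s * p)) *
             (\<integral>\<^sup>+ x\<in>S. epow (osc (Hrestr mu th S) f (cball x (2 powr (- real (Suc k))))) p
                \<partial>Hrestr mu th S)) (1/p)"

definition nice_family :: "'a::metric_space set \<Rightarrow> real \<Rightarrow> nat \<Rightarrow> (nat \<Rightarrow> 'a) \<Rightarrow> (nat \<Rightarrow> real) \<Rightarrow> bool" where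
  "nice_family S c M x r \<longleftrightarrow>
     (\<forall>i<M. 0 < r i \<and> r i \<le> 1 \<and> cball (x i) (c * r i) \<inter> S \<noteq> {}) \<and>
     (\<forall>i<M. \<forall>j<M. i \<noteq> j \<longrightarrow> cball (x i) (r i) \<inter> cball (x j) (r j) = {})"

end

theory Submission
  imports Defs
begin

(* Each ball B(x_i, r_i) of the family has a point y_i of S within distance c r_i; fix the dyadic
   radius t_i = 2^-k_i in [4 c r_i, 8 c r_i).  For every z in S near y_i the ball B(z, t_i)
   contains B(x_i, 2 c r_i), and by Ahlfors regularity and doubling its H_theta-measure is
   comparable to that of B(x_i, 2 c r_i); hence the mean oscillation on B(x_i, 2 c r_i) is
   controlled by the one on B(z, t_i).  Averaging over such z turns the i-th summand into
   2^(k_i (p - theta)) times the integral of E(f, B(z, 2^-k_i))^p over a piece of S.  Since the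
   balls B(x_i, r_i) are disjoint, doubling bounds how many pieces of the same scale overlap, so
   the pieces with k_i = k add up to the k-th term of the Besov seminorm. *)

lemma epow_zero [simp]: "0 < q \<Longrightarrow> epow 0 q = 0"
  by (simp add: epow_def)

lemma epow_mono:
  assumes "x \<le> y" "0 \<le> q"
  shows "epow x q \<le> epow y q"
proof (cases "y = top")
  case False
  then have "x \<noteq> top" using assms(1) top.extremum_unique by fastforce
  then have "enn2real x \<le> enn2real y" using assms(1) False by (simp add: enn2real_mono less_top)
  then have "enn2real x powr q \<le> enn2real y powr q" using assms(2) by (simp add: powr_mono2)
  then show ?thesis using False \<open>x \<noteq> top\<close> by (simp add: epow_def ennreal_leI)
qed (simp add: epow_def)

lemma epow_cmult:
  assumes "0 \<le> a" "0 < q"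
  shows "epow (ennreal a * x) q = ennreal (a powr q) * epow x q"
proof (cases "a = 0 \<or> x = top")
  case True
  then show ?thesis using assms by (auto simp: epow_def ennreal_mult_top)
next
  case False
  then have "a > 0" "x \<noteq> top" using assms by auto
  then have "ennreal a * x \<noteq> top" "enn2real (ennreal a * x) = a * enn2real x"
    by (simp_all add: ennreal_mult_eq_top_iff enn2real_mult)
  then show ?thesis using \<open>a > 0\<close> \<open>x \<noteq> top\<close>
    by (simp add: epow_def powr_mult ennreal_mult'[symmetric] enn2real_nonneg)
qed

lemma epow_epow_inverse:
  assumes "0 < p"
  shows "epow (epow b (1/p)) p = b"
  using assms by (cases "b = top") (simp_all add: epow_def powr_powr less_top)

lemma INF_le_cmult_INF_ennreal:
  fixes f h :: "'i \<Rightarrow> ennreal"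
  assumes "0 < K" "\<And>c. f c * ennreal (1/K) \<le> h c"
  shows "(INF c. f c) \<le> ennreal K * (INF c. h c)"
proof -
  have "(INF c. f c) * ennreal (1/K) \<le> (INF c. h c)"
    using assms(2) by (meson INF_greatest INF_lower UNIV_I mult_right_mono order_trans zero_le)
  then have "ennreal K * ((INF c. f c) * ennreal (1/K)) \<le> ennreal K * (INF c. h c)"
    by (rule mult_left_mono) simp
  moreover have "ennreal K * (X * ennreal (1/K)) = X" for X
    using assms(1) by (simp add: ac_simps ennreal_mult[symmetric])
  ultimately show ?thesis by simp
qed

section \<open>Lower integrals\<close>

text \<open>No measurability is assumed below: the integrands that occur later, mean oscillations
  over balls as functions of the centre, are not known to be Borel.\<close>

lemma nn_integral_superadditive:
  "integral\<^sup>N M f + integral\<^sup>N M g \<le> (\<integral>\<^sup>+ x. f x + g x \<partial>M)"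
proof -
  let ?A = "{h. simple_function M h \<and> h \<le> f}"
  let ?B = "{h. simple_function M h \<and> h \<le> g}"
  have ne: "?A \<noteq> {}" "?B \<noteq> {}" by (auto intro!: exI[of _ "\<lambda>_. 0"] simp: le_fun_def)
  have "integral\<^sup>N M f + integral\<^sup>N M g = (SUP a\<in>?A. integral\<^sup>S M a + (SUP b\<in>?B. integral\<^sup>S M b))"
    using ennreal_SUP_add_left[OF ne(1)] by (simp add: nn_integral_def)
  also have "\<dots> = (SUP a\<in>?A. SUP b\<in>?B. integral\<^sup>S M a + integral\<^sup>S M b)"
    using ennreal_SUP_add_right[OF ne(2)] by simp
  also have "\<dots> \<le> (\<integral>\<^sup>+ x. f x + g x \<partial>M)"
  proof (intro SUP_least)
    fix a b assume "a \<in> ?A" "b \<in> ?B"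
    then have "integral\<^sup>S M a + integral\<^sup>S M b = integral\<^sup>S M (\<lambda>x. a x + b x)" by simp
    also have "\<dots> \<le> (\<integral>\<^sup>+ x. f x + g x \<partial>M)"
      using \<open>a \<in> ?A\<close> \<open>b \<in> ?B\<close> unfolding nn_integral_def
      by (intro SUP_upper) (auto simp: le_fun_def intro: add_mono)
    finally show "integral\<^sup>S M a + integral\<^sup>S M b \<le> (\<integral>\<^sup>+ x. f x + g x \<partial>M)" .
  qed
  finally show ?thesis .
qed

lemma nn_integral_sum_superadditive:
  "(\<Sum>i\<in>P. integral\<^sup>N M (f i)) \<le> (\<integral>\<^sup>+ x. (\<Sum>i\<in>P. f i x) \<partial>M)"
proof (induction P rule: infinite_finite_induct)
  case (insert i P)
  then have "(\<Sum>i\<in>insert i P. integral\<^sup>N M (f i)) \<le> integral\<^sup>N M (f i) + (\<integral>\<^sup>+ x. (\<Sum>i\<in>P. f i x) \<partial>M)"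
    by (simp add: add_left_mono)
  also have "\<dots> \<le> (\<integral>\<^sup>+ x. f i x + (\<Sum>i\<in>P. f i x) \<partial>M)" by (rule nn_integral_superadditive)
  finally show ?case using insert by simp
qed auto

lemma nn_integral_cmult_le:
  assumes "0 \<le> a"
  shows "(\<integral>\<^sup>+x. ennreal a * h x \<partial>M) \<le> ennreal a * integral\<^sup>N M h"
proof (cases "a = 0")
  case False
  then have a: "a > 0" using assms by simp
  show ?thesis
    unfolding nn_integral_def[of M "\<lambda>x. ennreal a * h x"]
  proof (rule SUP_least)
    fix s assume "s \<in> {g. simple_function M g \<and> g \<le> (\<lambda>x. ennreal a * h x)}"
    then have s: "simple_function M s" "\<And>x. s x \<le> ennreal a * h x" by (auto simp: le_fun_def)
    define s' where "s' = (\<lambda>x. ennreal (1/a) * s x)"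
    have s_eq: "s = (\<lambda>x. ennreal a * s' x)"
      using a by (simp add: s'_def mult.assoc[symmetric] ennreal_mult[symmetric])
    have s': "simple_function M s'" unfolding s'_def using s(1) by auto
    have "s' x \<le> h x" for x
    proof -
      have "s' x \<le> ennreal (1/a) * (ennreal a * h x)"
        unfolding s'_def using s(2) by (intro mult_left_mono) auto
      also have "\<dots> = h x" using a by (simp add: mult.assoc[symmetric] ennreal_mult[symmetric])
      finally show ?thesis .
    qed
    then have "integral\<^sup>S M s' \<le> integral\<^sup>N M h"
      unfolding nn_integral_def using s' by (intro SUP_upper) (auto simp: le_fun_def)
    then show "integral\<^sup>S M s \<le> ennreal a * integral\<^sup>N M h"
      unfolding s_eq simple_integral_mult[OF s'] by (simp add: mult_left_mono)
  qed
qed simp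

lemma sum_nn_integral_indicator_le_overlap:
  assumes "finite J" "\<And>i. i \<in> J \<Longrightarrow> A i \<subseteq> S" "0 \<le> N"
    and overlap: "\<And>z. z \<in> S \<Longrightarrow> real (card {i\<in>J. z \<in> A i}) \<le> N"
  shows "(\<Sum>i\<in>J. \<integral>\<^sup>+z. g z * indicator (A i) z \<partial>M) \<le> ennreal N * (\<integral>\<^sup>+z\<in>S. g z \<partial>M)"
proof -
  have count: "(\<Sum>i\<in>J. indicator (A i) z :: ennreal) \<le> ennreal N * indicator S z" for z
  proof (cases "z \<in> S")
    case True
    have "(\<Sum>i\<in>J. indicator (A i) z :: ennreal) = (\<Sum>i\<in>{i\<in>J. z \<in> A i}. 1)"
      using assms(1) by (simp add: sum.inter_filter indicator_def Int_def)
    also have "\<dots> \<le> ennreal N"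
      using overlap[OF True] by (simp add: ennreal_of_nat_eq_real_of_nat ennreal_leI)
    finally show ?thesis using True by simp
  qed (use assms(2) in \<open>force intro: sum.neutral\<close>)
  have "(\<Sum>i\<in>J. \<integral>\<^sup>+z. g z * indicator (A i) z \<partial>M) \<le> (\<integral>\<^sup>+z. g z * (\<Sum>i\<in>J. indicator (A i) z) \<partial>M)"
    using nn_integral_sum_superadditive by (simp add: sum_distrib_left)
  also have "\<dots> \<le> (\<integral>\<^sup>+z. ennreal N * (g z * indicator S z) \<partial>M)"
    using count by (intro nn_integral_mono) (metis mult.left_commute mult_left_mono zero_le)
  also have "\<dots> \<le> ennreal N * (\<integral>\<^sup>+z\<in>S. g z \<partial>M)"
    using assms(3) by (rule nn_integral_cmult_le)
  finally show ?thesis .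
qed

section \<open>Mean oscillation, doubling and dyadic scales\<close>

lemma cball_subset_cball_of_dist:
  fixes x y :: "'a::metric_space"
  assumes "dist x y + s \<le> t"
  shows "cball y s \<subseteq> cball x t"
proof
  fix w assume "w \<in> cball y s"
  then show "w \<in> cball x t" using assms dist_triangle[of x w y] by simp
qed

lemma osc_le_measure_ratio_osc:
  assumes "A \<subseteq> B" "A \<in> sets m" "B \<in> sets m" "0 < emeasure m A" "emeasure m B < \<infinity>"
    and ratio: "emeasure m B \<le> ennreal K * emeasure m A"
  shows "osc m g A \<le> ennreal K * osc m g B"
proof -
  have AB: "emeasure m A \<le> emeasure m B" using emeasure_mono[OF assms(1,3)] .
  define a where "a = measure m A"
  define b where "b = measure m B"
  have a: "emeasure m A = ennreal a" and b: "emeasure m B = ennreal b"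
    using AB assms(5) unfolding a_def b_def by (auto intro!: emeasure_eq_ennreal_measure)
  have a0: "a > 0" using assms(4) a by simp
  moreover have "0 \<le> b" unfolding b_def by (rule measure_nonneg)
  ultimately have b0: "b > 0" using AB a b by (simp add: ennreal_le_iff)
  have K: "K > 0"
  proof (rule ccontr)
    assume "\<not> K > 0"
    then have "ennreal K = 0" by (simp add: ennreal_eq_0_iff)
    then have "emeasure m B \<le> 0" using ratio by simp
    then show False using b b0 by simp
  qed
  have "b \<le> K * a"
    using ratio a0 K by (simp add: a b ennreal_mult[symmetric])
  then have "1 / (a * K) \<le> 1 / b"
    using a0 b0 by (intro divide_left_mono) (auto simp: mult.commute)
  have divide: "X / ennreal y = X * ennreal (1/y)" if "y > 0" for X y
    using that by (simp add: divide_ennreal_def inverse_ennreal divide_inverse)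
  define mean where "mean G c = (\<integral>\<^sup>+ y\<in>G. ennreal \<bar>g y - c\<bar> \<partial>m) / emeasure m G" for G c
  have "mean A c * ennreal (1/K) \<le> mean B c" for c
  proof -
    have "(\<integral>\<^sup>+ y\<in>A. ennreal \<bar>g y - c\<bar> \<partial>m) \<le> (\<integral>\<^sup>+ y\<in>B. ennreal \<bar>g y - c\<bar> \<partial>m)"
      using assms(1) by (intro nn_integral_mono) (auto split: split_indicator)
    moreover have "mean A c * ennreal (1/K) = (\<integral>\<^sup>+ y\<in>A. ennreal \<bar>g y - c\<bar> \<partial>m) * ennreal (1/(a*K))"
      using a0 K by (simp add: mean_def a divide mult.assoc ennreal_mult[symmetric])
    ultimately show ?thesis
      using \<open>1 / (a * K) \<le> 1 / b\<close> b0 by (auto simp: mean_def b divide intro!: mult_mono)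
  qed
  then have "(INF c. mean A c) \<le> ennreal K * (INF c. mean B c)"
    by (rule INF_le_cmult_INF_ennreal[OF K])
  then show ?thesis
    using assms(4) AB by (simp add: osc_def mean_def)
qed

lemma emeasure_cball_doubling_iter:
  assumes dbl: "\<And>x r. 0 < r \<Longrightarrow> r \<le> R \<Longrightarrow> emeasure mu (cball x (2*r)) \<le> ennreal D * emeasure mu (cball x r)"
    and "0 \<le> D" "0 < r" "2^n * r \<le> 2 * R"
  shows "emeasure mu (cball x (2^n * r)) \<le> ennreal (D^n) * emeasure mu (cball x r)"
  using assms(4)
proof (induction n)
  case (Suc n)
  have "2^n * r \<le> R" using Suc.prems by simp
  moreover have "0 < 2^n * r" using \<open>0 < r\<close> by simp
  ultimately have IH: "emeasure mu (cball x (2^n * r)) \<le> ennreal (D^n) * emeasure mu (cball x r)"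
    by (intro Suc.IH) auto
  have "emeasure mu (cball x (2^Suc n * r)) = emeasure mu (cball x (2 * (2^n * r)))"
    by (simp add: mult.assoc)
  also have "\<dots> \<le> ennreal D * emeasure mu (cball x (2^n * r))"
    using dbl \<open>2^n * r \<le> R\<close> \<open>0 < r\<close> by simp
  also have "\<dots> \<le> ennreal D * (ennreal (D^n) * emeasure mu (cball x r))"
    using IH by (rule mult_left_mono) simp
  also have "\<dots> = ennreal (D ^ Suc n) * emeasure mu (cball x r)"
    using \<open>0 \<le> D\<close> by (simp add: ennreal_mult mult.assoc)
  finally show ?case .
qed simp

lemma emeasure_cball_finite_if_doubling:
  assumes "sets mu = sets borel"
    and "\<forall>x. \<exists>e>0. emeasure mu (cball x e) < \<infinity>"
    and "\<forall>R>0. \<exists>C. \<forall>r. 0 < r \<and> r \<le> R \<longrightarrow>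
        (\<forall>x. emeasure mu (cball x (2*r)) \<le> ennreal C * emeasure mu (cball x r))"
  shows "emeasure mu (cball x r) < \<infinity>"
proof -
  obtain e where e: "e > 0" "emeasure mu (cball x e) < \<infinity>" using assms(2) by blast
  obtain n where "r / e < 2^n" using real_arch_pow[of 2 "r/e"] by auto
  then have rn: "r \<le> 2^n * e" using e by (simp add: field_simps)
  obtain C where C: "\<And>r x. 0 < r \<Longrightarrow> r \<le> 2^n * e \<Longrightarrow>
        emeasure mu (cball x (2*r)) \<le> ennreal C * emeasure mu (cball x r)"
    using assms(3) e(1) by (metis zero_less_numeral zero_less_power mult_pos_pos)
  have "emeasure mu (cball x r) \<le> emeasure mu (cball x (2^n * e))"
    using rn by (intro emeasure_mono) (auto simp: assms(1))
  also have "\<dots> \<le> ennreal (max C 0 ^ n) * emeasure mu (cball x e)"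
  proof (rule emeasure_cball_doubling_iter[where R = "2^n * e"])
    fix y u assume "0 < u" "u \<le> 2^n * e"
    then have "emeasure mu (cball y (2*u)) \<le> ennreal C * emeasure mu (cball y u)" by (rule C)
    also have "\<dots> \<le> ennreal (max C 0) * emeasure mu (cball y u)"
      by (intro mult_right_mono ennreal_leI) auto
    finally show "emeasure mu (cball y (2*u)) \<le> ennreal (max C 0) * emeasure mu (cball y u)" .
  qed (use e(1) in auto)
  also have "\<dots> < \<infinity>" using e(2) by (simp add: ennreal_mult_less_top)
  finally show ?thesis .
qed

lemma dyadic_radius_between:
  fixes t :: real
  assumes "0 < t" "t \<le> 1/2"
  obtains j where "t \<le> 2 powr - real (Suc j)" "2 powr - real (Suc j) < 2*t"
proof -
  have "\<exists>n. (1/2::real)^n < 2*t" using assms by (intro real_arch_pow_inv) auto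
  define n where "n = (LEAST n. (1/2::real)^n < 2*t)"
  have n: "(1/2::real)^n < 2*t" unfolding n_def using \<open>\<exists>n. _\<close> by (rule LeastI_ex)
  then obtain j where j: "n = Suc j" using assms by (cases n) auto
  have "\<not> (1/2::real)^j < 2*t"
    using j n_def not_less_Least[of j "\<lambda>n. (1/2::real)^n < 2*t"] by simp
  have e: "2 powr - real (Suc j) = (1/2::real)^Suc j"
    by (simp add: powr_minus_divide powr_realpow power_one_over del: of_nat_Suc)
  show ?thesis
  proof (rule that[of j])
    show "t \<le> 2 powr - real (Suc j)" unfolding e using \<open>\<not> (1/2::real)^j < 2*t\<close> by simp
    show "2 powr - real (Suc j) < 2*t" unfolding e using n j by simp
  qed
qed

lemma dyadic_weight_bound:
  fixes c r \<theta> p :: real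
  assumes "0 < r" "1 \<le> c" "0 < \<theta>" "\<theta> < p" "2 powr (- real k) < 8 * (c * r)"
  shows "(c * r) powr \<theta> / r powr p \<le> c powr p * 8 powr (p - \<theta>) * 2 powr (real k * (1 - \<theta>/p) * p)"
proof -
  define \<rho> where "\<rho> = c * r"
  define t where "t = 2 powr (- real k)"
  have "\<rho> > 0" "t > 0" "c powr p > 0" using assms by (auto simp: \<rho>_def t_def)
  have "\<rho> powr p = c powr p * r powr p"
    using assms(1,2) unfolding \<rho>_def by (simp add: powr_mult)
  then have "\<rho> powr \<theta> / r powr p = c powr p * (\<rho> powr \<theta> / \<rho> powr p)"
    using \<open>c powr p > 0\<close> by simp
  also have "\<dots> = c powr p * \<rho> powr (\<theta> - p)"
    by (simp add: powr_diff)
  also have "\<dots> \<le> c powr p * (t/8) powr (\<theta> - p)"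
  proof (intro mult_left_mono powr_mono2')
    show "t / 8 \<le> \<rho>" using assms(5) by (simp add: t_def \<rho>_def)
  qed (use assms \<open>t > 0\<close> in auto)
  also have "(t/8) powr (\<theta> - p) = t powr (\<theta> - p) * 8 powr (p - \<theta>)"
  proof -
    have "(t/8) powr (\<theta> - p) = t powr (\<theta> - p) * (1 / 8 powr (\<theta> - p))"
      by (simp add: powr_divide)
    also have "1 / 8 powr (\<theta> - p) = 8 powr (p - \<theta>)"
      by (metis minus_diff_eq powr_minus_divide)
    finally show ?thesis .
  qed
  also have "t powr (\<theta> - p) = 2 powr (real k * (1 - \<theta>/p) * p)"
  proof -
    have "real k * (1 - \<theta>/p) * p = - real k * (\<theta> - p)" using assms(3,4) by (simp add: field_simps)
    then show ?thesis by (simp add: t_def powr_powr)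
  qed
  finally show ?thesis unfolding \<rho>_def by (simp only: ac_simps)
qed

lemma sum_group_by_key:
  fixes w :: "'k \<Rightarrow> 'b::comm_semiring_0"
  assumes "finite I"
  shows "(\<Sum>i\<in>I. w (k i) * a i) = (\<Sum>q\<in>k ` I. w q * (\<Sum>i\<in>{i\<in>I. k i = q}. a i))"
proof -
  have "(\<Sum>i\<in>I. w (k i) * a i) = (\<Sum>q\<in>k ` I. \<Sum>i\<in>{i\<in>I. k i = q}. w (k i) * a i)"
    by (rule sum.group[symmetric]) (use assms in auto)
  also have "\<dots> = (\<Sum>q\<in>k ` I. w q * (\<Sum>i\<in>{i\<in>I. k i = q}. a i))"
    by (intro sum.cong refl) (auto simp: sum_distrib_left)
  finally show ?thesis .
qed

lemma nice_family_dyadic_centres: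
  assumes "nice_family S c M x r" "\<forall>i<M. 8 * c * r i \<le> 1" "1 \<le> c"
  obtains y k where "\<And>i. i < M \<Longrightarrow> y i \<in> S \<and> dist (x i) (y i) \<le> c * r i \<and>
      4 * (c * r i) \<le> 2 powr - real (Suc (k i)) \<and> 2 powr - real (Suc (k i)) < 8 * (c * r i)"
proof -
  have "\<forall>i. \<exists>yk. i < M \<longrightarrow> fst yk \<in> S \<and> dist (x i) (fst yk) \<le> c * r i \<and>
      4 * (c * r i) \<le> 2 powr - real (Suc (snd yk)) \<and> 2 powr - real (Suc (snd yk)) < 8 * (c * r i)"
  proof (intro allI)
    fix i show "\<exists>yk. i < M \<longrightarrow> fst yk \<in> S \<and> dist (x i) (fst yk) \<le> c * r i \<and>
      4 * (c * r i) \<le> 2 powr - real (Suc (snd yk)) \<and> 2 powr - real (Suc (snd yk)) < 8 * (c * r i)"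
    proof (cases "i < M")
      case True
      then have "cball (x i) (c * r i) \<inter> S \<noteq> {}" "0 < r i" "8 * c * r i \<le> 1"
        using assms(1,2) by (auto simp: nice_family_def)
      then obtain y where "y \<in> S" "dist (x i) y \<le> c * r i" by auto
      have "0 < 4 * (c * r i)" "4 * (c * r i) \<le> 1/2"
        using \<open>0 < r i\<close> \<open>8 * c * r i \<le> 1\<close> assms(3) by auto
      then obtain j where "4 * (c * r i) \<le> 2 powr - real (Suc j)" "2 powr - real (Suc j) < 2 * (4 * (c * r i))"
        by (rule dyadic_radius_between)
      with \<open>y \<in> S\<close> \<open>dist (x i) y \<le> c * r i\<close> show ?thesis
        by (intro exI[of _ "(y, j)"]) simp
    qed simp
  qed
  from choice[OF this] obtain yk where "\<forall>i. i < M \<longrightarrow> fst (yk i) \<in> S \<and> dist (x i) (fst (yk i)) \<le> c * r i \<and>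
      4 * (c * r i) \<le> 2 powr - real (Suc (snd (yk i))) \<and> 2 powr - real (Suc (snd (yk i))) < 8 * (c * r i)"
    by blast
  then show ?thesis by (intro that[of "fst \<circ> yk" "snd \<circ> yk"]) simp
qed

section \<open>Ahlfors regular sets in doubling spaces\<close>

locale ADR_doubling_space =
  fixes mu nu :: "'a::metric_space measure" and \<theta> k1 k2 D R :: real and S :: "'a set"
  assumes sets_mu: "sets mu = sets borel" and sets_nu: "sets nu = sets borel"
    and mu_cball_finite: "\<And>x r. emeasure mu (cball x r) < \<infinity>"
    and mu_cball_pos: "\<And>x r. 0 < r \<Longrightarrow> 0 < emeasure mu (cball x r)"
    and doubling: "\<And>x r. 0 < r \<Longrightarrow> r \<le> R \<Longrightarrow>
      emeasure mu (cball x (2*r)) \<le> ennreal D * emeasure mu (cball x r)"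
    and D_ge_1: "1 \<le> D" and R_ge_1: "1 \<le> R"
    and closed_S: "closed S"
    and nu_concentrated: "\<And>A. A \<in> sets borel \<Longrightarrow> emeasure nu (A \<inter> S) = emeasure nu A"
    and ADR_lower: "\<And>x r. x \<in> S \<Longrightarrow> 0 < r \<Longrightarrow> r \<le> 1 \<Longrightarrow>
      ennreal k1 * emeasure mu (cball x r) * ennreal (r powr -\<theta>) \<le> emeasure nu (cball x r)"
    and ADR_upper: "\<And>x r. x \<in> S \<Longrightarrow> 0 < r \<Longrightarrow> r \<le> 1 \<Longrightarrow>
      emeasure nu (cball x r) \<le> ennreal k2 * emeasure mu (cball x r) * ennreal (r powr -\<theta>)"
    and k1_pos: "0 < k1" and k2_pos: "0 < k2" and theta_pos: "0 < \<theta>"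
begin

lemma emeasure_mu_cball: "emeasure mu (cball x r) = ennreal (measure mu (cball x r))"
  using mu_cball_finite[of x r] by (intro emeasure_eq_ennreal_measure) auto

lemma measure_mu_cball_pos: "0 < r \<Longrightarrow> 0 < measure mu (cball x r)"
  using mu_cball_pos[of r x] emeasure_mu_cball[of x r] by simp

lemma mu_cball_doubling_iter:
  "0 < r \<Longrightarrow> 2^n * r \<le> 2 * R \<Longrightarrow>
    emeasure mu (cball x (2^n * r)) \<le> ennreal (D^n) * emeasure mu (cball x r)"
  using emeasure_cball_doubling_iter[of R mu D r n x] doubling D_ge_1 by auto

lemma nu_cball_ge:
  assumes "y \<in> S" "0 < \<rho>" "\<rho> \<le> 1"
  shows "ennreal (k1 * measure mu (cball y \<rho>) * \<rho> powr -\<theta>) \<le> emeasure nu (cball y \<rho>)"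
    and "0 < k1 * measure mu (cball y \<rho>) * \<rho> powr -\<theta>"
  using ADR_lower[OF assms] measure_mu_cball_pos[OF assms(2)] k1_pos assms(2)
  by (simp_all add: emeasure_mu_cball ennreal_mult)

definition ball_ratio_const :: real where
  "ball_ratio_const = k2 * D^4 * 4 powr -\<theta> / k1"

lemma ball_ratio_const_pos: "0 < ball_ratio_const"
  using k1_pos k2_pos D_ge_1 by (simp add: ball_ratio_const_def)

text \<open>Both balls are compared with the ball of radius \<open>\<rho>\<close> around the point \<open>y\<close> of \<open>S\<close>:
  from below by Ahlfors regularity at \<open>y\<close>, from above by regularity at \<open>z\<close> and four doublings.\<close>
lemma nu_cball_le_ratio:
  assumes "y \<in> S" "z \<in> S" "dist x y \<le> \<rho>" "dist y z \<le> \<rho>" "0 < \<rho>" "8 * \<rho> \<le> 1"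
    and "4 * \<rho> \<le> t" "t \<le> 8 * \<rho>"
  shows "emeasure nu (cball z t) \<le> ennreal ball_ratio_const * emeasure nu (cball x (2*\<rho>))"
proof -
  define my where "my = measure mu (cball y \<rho>)"
  have "cball z t \<subseteq> cball y (2^4 * \<rho>)"
    using assms(4,5,8) by (intro cball_subset_cball_of_dist) simp
  then have "emeasure mu (cball z t) \<le> emeasure mu (cball y (2^4 * \<rho>))"
    by (intro emeasure_mono) (auto simp: sets_mu)
  also have "\<dots> \<le> ennreal (D^4) * ennreal my"
    using mu_cball_doubling_iter[of \<rho> 4 y] assms(5,6) R_ge_1 by (simp add: my_def emeasure_mu_cball)
  finally have mu_zt: "emeasure mu (cball z t) \<le> ennreal (D^4 * my)"
    using D_ge_1 measure_nonneg[of mu "cball y \<rho>"] by (simp add: my_def ennreal_mult)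
  have "t powr -\<theta> \<le> (4*\<rho>) powr -\<theta>"
    using assms(5,7) theta_pos by (intro powr_mono2') auto
  then have t_pow: "t powr -\<theta> \<le> 4 powr -\<theta> * \<rho> powr -\<theta>"
    using assms(5) by (simp add: powr_mult)
  have "emeasure nu (cball z t) \<le> ennreal k2 * emeasure mu (cball z t) * ennreal (t powr -\<theta>)"
    using ADR_upper[OF assms(2)] assms(5,6,7,8) by simp
  also have "\<dots> \<le> ennreal k2 * ennreal (D^4 * my) * ennreal (4 powr -\<theta> * \<rho> powr -\<theta>)"
    using mu_zt t_pow by (intro mult_mono ennreal_leI) auto
  also have "\<dots> = ennreal ball_ratio_const * ennreal (k1 * my * \<rho> powr -\<theta>)"
    using k1_pos k2_pos D_ge_1 measure_mu_cball_pos[OF assms(5)]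
    by (simp add: ball_ratio_const_def my_def ennreal_mult[symmetric])
  also have "\<dots> \<le> ennreal ball_ratio_const * emeasure nu (cball y \<rho>)"
    using nu_cball_ge(1)[OF assms(1,5)] assms(6) by (intro mult_left_mono) (auto simp: my_def)
  also have "\<dots> \<le> ennreal ball_ratio_const * emeasure nu (cball x (2*\<rho>))"
    using assms(3,5) by (intro mult_left_mono emeasure_mono cball_subset_cball_of_dist) (auto simp: sets_nu)
  finally show ?thesis .
qed

lemma osc_cball_le_osc_cball:
  assumes "y \<in> S" "z \<in> S" "dist x y \<le> \<rho>" "dist y z \<le> \<rho>" "0 < \<rho>" "8 * \<rho> \<le> 1"
    and "4 * \<rho> \<le> t" "t \<le> 8 * \<rho>"
  shows "osc nu f (cball x (2*\<rho>)) \<le> ennreal ball_ratio_const * osc nu f (cball z t)"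
proof (rule osc_le_measure_ratio_osc)
  have "dist z x \<le> 2*\<rho>"
    using dist_triangle[of z x y] dist_commute[of z y] dist_commute[of y x] assms(3,4) by linarith
  then show "cball x (2*\<rho>) \<subseteq> cball z t"
    using assms(7) by (intro cball_subset_cball_of_dist) simp
  have "\<rho> \<le> 1" using assms(6) by simp
  have "0 < ennreal (k1 * measure mu (cball y \<rho>) * \<rho> powr -\<theta>)"
    using nu_cball_ge(2)[OF assms(1,5) \<open>\<rho> \<le> 1\<close>] by simp
  also have "\<dots> \<le> emeasure nu (cball y \<rho>)"
    by (rule nu_cball_ge(1)[OF assms(1,5) \<open>\<rho> \<le> 1\<close>])
  also have "\<dots> \<le> emeasure nu (cball x (2*\<rho>))"
    using assms(3,5) by (intro emeasure_mono cball_subset_cball_of_dist) (auto simp: sets_nu)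
  finally show "0 < emeasure nu (cball x (2*\<rho>))" .
  show "emeasure nu (cball z t) < \<infinity>"
  proof (rule le_less_trans)
    show "emeasure nu (cball z t) \<le> ennreal k2 * emeasure mu (cball z t) * ennreal (t powr -\<theta>)"
      using ADR_upper[OF assms(2)] assms(5-8) by simp
  qed (use mu_cball_finite[of z t] in \<open>simp add: ennreal_mult_less_top\<close>)
  show "emeasure nu (cball z t) \<le> ennreal ball_ratio_const * emeasure nu (cball x (2*\<rho>))"
    by (rule nu_cball_le_ratio[OF assms])
qed (auto simp: sets_nu)

lemma mu_cball_le_nu_cball:
  assumes "y \<in> S" "dist x y \<le> \<rho>" "0 < r" "r \<le> \<rho>" "\<rho> \<le> 1"
  shows "emeasure mu (cball x r) \<le> ennreal (D * \<rho> powr \<theta> / k1) * emeasure nu (cball y \<rho> \<inter> S)"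
proof -
  have "\<rho> > 0" using assms(3,4) by simp
  have "emeasure mu (cball x r) \<le> emeasure mu (cball y (2*\<rho>))"
    using assms(2,4) by (intro emeasure_mono cball_subset_cball_of_dist) (auto simp: sets_mu dist_commute)
  also have "\<dots> \<le> ennreal D * ennreal (measure mu (cball y \<rho>))"
    using doubling[of \<rho> y] \<open>\<rho> > 0\<close> assms(5) R_ge_1 by (simp add: emeasure_mu_cball)
  also have "\<dots> = ennreal (D * \<rho> powr \<theta> / k1) * ennreal (k1 * measure mu (cball y \<rho>) * \<rho> powr -\<theta>)"
    using D_ge_1 k1_pos \<open>\<rho> > 0\<close>
    by (simp add: ennreal_mult[symmetric] powr_minus field_simps)
  also have "\<dots> \<le> ennreal (D * \<rho> powr \<theta> / k1) * emeasure nu (cball y \<rho>)"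
    using nu_cball_ge(1)[OF assms(1) \<open>\<rho> > 0\<close> assms(5)] by (rule mult_left_mono) simp
  also have "\<dots> = ennreal (D * \<rho> powr \<theta> / k1) * emeasure nu (cball y \<rho> \<inter> S)"
    by (simp add: nu_concentrated)
  finally show ?thesis .
qed

lemma nu_cball_mean_osc_le:
  assumes "y \<in> S" "dist x y \<le> \<rho>" "0 < \<rho>" "8 * \<rho> \<le> 1" "4 * \<rho> \<le> t" "t \<le> 8 * \<rho>" "0 < p"
  shows "emeasure nu (cball y \<rho> \<inter> S) * epow (osc nu f (cball x (2*\<rho>))) p
    \<le> ennreal (ball_ratio_const powr p) *
      (\<integral>\<^sup>+z. epow (osc nu f (cball z t)) p * indicator (cball y \<rho> \<inter> S) z \<partial>nu)"
proof -
  define A where "A = cball y \<rho> \<inter> S"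
  define E where "E = epow (osc nu f (cball x (2*\<rho>))) p"
  define g where "g z = epow (osc nu f (cball z t)) p" for z
  have pointwise: "E \<le> ennreal (ball_ratio_const powr p) * g z" if "z \<in> A" for z
  proof -
    have "E \<le> epow (ennreal ball_ratio_const * osc nu f (cball z t)) p"
      unfolding E_def using that assms
      by (intro epow_mono osc_cball_le_osc_cball[of y]) (auto simp: A_def)
    also have "\<dots> = ennreal (ball_ratio_const powr p) * g z"
      using ball_ratio_const_pos assms(7) by (simp add: epow_cmult g_def)
    finally show ?thesis .
  qed
  have "emeasure nu A * E = (\<integral>\<^sup>+z. E * indicator A z \<partial>nu)"
    using closed_S by (simp add: A_def sets_nu nn_integral_cmult_indicator mult.commute)
  also have "\<dots> \<le> (\<integral>\<^sup>+z. ennreal (ball_ratio_const powr p) * (g z * indicator A z) \<partial>nu)"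
    using pointwise by (intro nn_integral_mono) (auto split: split_indicator)
  also have "\<dots> \<le> ennreal (ball_ratio_const powr p) * (\<integral>\<^sup>+z. g z * indicator A z \<partial>nu)"
    by (rule nn_integral_cmult_le) simp
  finally show ?thesis by (simp add: A_def E_def g_def)
qed

definition ball_term_const :: "real \<Rightarrow> real \<Rightarrow> real" where
  "ball_term_const c p = D * c powr p * 8 powr (p - \<theta>) / k1 * ball_ratio_const powr p"

lemma ball_term_const_pos: "1 \<le> c \<Longrightarrow> 0 < ball_term_const c p"
  using k1_pos D_ge_1 ball_ratio_const_pos by (simp add: ball_term_const_def)

lemma osc_summand_le_dyadic_integral:
  assumes "0 < r" "1 \<le> c" "\<theta> < p" "8 * c * r \<le> 1" "y \<in> S" "dist x y \<le> c * r"
    and "4 * (c * r) \<le> 2 powr - real k" "2 powr - real k < 8 * (c * r)"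
  shows "emeasure mu (cball x r) / ennreal (r powr p) * epow (osc nu f (cball x (2*c*r))) p
     \<le> ennreal (ball_term_const c p) * (ennreal (2 powr (real k * (1 - \<theta>/p) * p)) *
         (\<integral>\<^sup>+z. epow (osc nu f (cball z (2 powr - real k))) p * indicator (cball y (c*r) \<inter> S) z \<partial>nu))"
proof -
  define \<rho> where "\<rho> = c * r"
  define A where "A = cball y \<rho> \<inter> S"
  define E where "E = epow (osc nu f (cball x (2*\<rho>))) p"
  define I where "I = (\<integral>\<^sup>+z. epow (osc nu f (cball z (2 powr - real k))) p * indicator A z \<partial>nu)"
  define K where "K = ball_ratio_const"
  define a where "a = D * \<rho> powr \<theta> / k1 / r powr p"
  have "0 < p" "0 < \<rho>" "8 * \<rho> \<le> 1" "r \<le> \<rho>" "0 \<le> a"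
    using assms theta_pos k1_pos D_ge_1 by (auto simp: \<rho>_def a_def mult.assoc)
  have "a = D / k1 * (\<rho> powr \<theta> / r powr p)" by (simp add: a_def)
  also have "\<dots> \<le> D / k1 * (c powr p * 8 powr (p - \<theta>) * 2 powr (real k * (1 - \<theta>/p) * p))"
    using dyadic_weight_bound[OF assms(1,2) theta_pos assms(3,8)] D_ge_1 k1_pos
    by (intro mult_left_mono) (auto simp: \<rho>_def)
  finally have "a * K powr p \<le> D / k1 * (c powr p * 8 powr (p - \<theta>) * 2 powr (real k * (1 - \<theta>/p) * p)) * K powr p"
    by (rule mult_right_mono) simp
  then have weight: "a * K powr p \<le> ball_term_const c p * 2 powr (real k * (1 - \<theta>/p) * p)"
    by (simp add: ball_term_const_def K_def ac_simps)
  have "emeasure mu (cball x r) / ennreal (r powr p) * E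
      \<le> ennreal (D * \<rho> powr \<theta> / k1) * emeasure nu A / ennreal (r powr p) * E"
    using mu_cball_le_nu_cball[OF assms(5) _ assms(1) \<open>r \<le> \<rho>\<close>] assms(6) \<open>8 * \<rho> \<le> 1\<close>
    by (intro mult_right_mono divide_right_mono_ennreal) (auto simp: A_def \<rho>_def)
  also have "\<dots> = ennreal a * (emeasure nu A * E)"
    using assms(1) D_ge_1 k1_pos
    by (simp add: a_def divide_ennreal_def inverse_ennreal ennreal_mult[symmetric] divide_inverse ac_simps)
  also have "\<dots> \<le> ennreal a * (ennreal (K powr p) * I)"
    using nu_cball_mean_osc_le[OF assms(5) _ \<open>0 < \<rho>\<close> \<open>8 * \<rho> \<le> 1\<close> _ _ \<open>0 < p\<close>] assms(6-8)
    by (intro mult_left_mono) (auto simp: A_def E_def I_def K_def \<rho>_def)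
  also have "\<dots> = ennreal (a * K powr p) * I"
    using \<open>0 \<le> a\<close> by (simp add: ennreal_mult mult.assoc)
  also have "\<dots> \<le> ennreal (ball_term_const c p * 2 powr (real k * (1 - \<theta>/p) * p)) * I"
    using weight by (intro mult_right_mono ennreal_leI) auto
  finally show ?thesis
    using less_imp_le[OF ball_term_const_pos[OF assms(2)]]
    by (simp add: E_def I_def A_def \<rho>_def ennreal_mult mult.assoc)
qed

context
  fixes c :: real and m :: nat
  assumes c_ge_1: "1 \<le> c" and c_le: "c \<le> 2^m" and R_ge: "2^m \<le> R"
begin

lemma mu_cball_le_enlarged_cball:
  assumes "0 < r" "8 * c * r \<le> 1" "dist x z \<le> 2 * (c * r)" "t \<le> 8 * (c * r)"
  shows "emeasure mu (cball z t) \<le> ennreal (D^(m+4)) * emeasure mu (cball x r)"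
proof -
  have "r \<le> c * r" "c * r \<le> 2^m * r" "0 < r"
    using c_ge_1 c_le assms(1) by auto
  have "8 * (c * r) \<le> 1" using assms(2) by (simp add: mult.assoc)
  then have "r \<le> 1/8" using \<open>r \<le> c * r\<close> by linarith
  have "dist x z + t \<le> 16 * (c * r)" using assms(3,4) \<open>r \<le> c * r\<close> \<open>0 < r\<close> by linarith
  also have "\<dots> \<le> 2^(m+4) * r" using \<open>c * r \<le> 2^m * r\<close> by (simp add: power_add)
  finally have "dist x z + t \<le> 2^(m+4) * r" .
  then have "emeasure mu (cball z t) \<le> emeasure mu (cball x (2^(m+4) * r))"
    by (intro emeasure_mono cball_subset_cball_of_dist) (auto simp: sets_mu)
  also have "\<dots> \<le> ennreal (D^(m+4)) * emeasure mu (cball x r)"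
  proof (rule mu_cball_doubling_iter[OF assms(1)])
    have "2^(m+4) * r = 2 * (2^m * (8 * r))" by (simp add: power_add)
    also have "\<dots> \<le> 2 * (2^m * 1)" using \<open>r \<le> 1/8\<close> by (intro mult_left_mono) auto
    finally show "2^(m+4) * r \<le> 2 * R" using R_ge by simp
  qed
  finally show ?thesis .
qed

text \<open>Each ball of the family lies in \<open>B(z,t)\<close>, which in turn lies in the \<open>2^(m+4)\<close>-fold
  enlargement of that ball; disjointness then bounds the number of balls.\<close>
lemma card_disjoint_cballs_near_point:
  fixes x :: "'i \<Rightarrow> 'a" and r :: "'i \<Rightarrow> real"
  assumes "finite J"
    and near: "\<And>i. i \<in> J \<Longrightarrow> 0 < r i \<and> 8 * c * r i \<le> 1 \<and> dist (x i) z \<le> 2 * (c * r i) \<and>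
      4 * (c * r i) \<le> t \<and> t \<le> 8 * (c * r i)"
    and disjoint: "\<And>i j. i \<in> J \<Longrightarrow> j \<in> J \<Longrightarrow> i \<noteq> j \<Longrightarrow> cball (x i) (r i) \<inter> cball (x j) (r j) = {}"
  shows "real (card J) \<le> D^(m+4)"
proof (cases "J = {}")
  case False
  then obtain i0 where "i0 \<in> J" by auto
  then have "0 < t" using near[of i0] c_ge_1 by (smt (verit) mult_pos_pos)
  define bz where "bz = measure mu (cball z t)"
  have bz: "emeasure mu (cball z t) = ennreal bz" "0 < bz"
    using emeasure_mu_cball measure_mu_cball_pos \<open>0 < t\<close> by (auto simp: bz_def)
  have inside: "cball (x i) (r i) \<subseteq> cball z t" if "i \<in> J" for i
  proof (rule cball_subset_cball_of_dist)
    have "0 < r i" "dist z (x i) \<le> 2 * (c * r i)" "4 * (c * r i) \<le> t"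
      using near[OF that] by (auto simp: dist_commute)
    moreover have "r i \<le> c * r i" using c_ge_1 \<open>0 < r i\<close> by simp
    ultimately show "dist z (x i) + r i \<le> t" by linarith
  qed
  have "(\<Sum>i\<in>J. emeasure mu (cball z t)) \<le> (\<Sum>i\<in>J. ennreal (D^(m+4)) * emeasure mu (cball (x i) (r i)))"
    using near by (intro sum_mono mu_cball_le_enlarged_cball) auto
  then have "of_nat (card J) * emeasure mu (cball z t) \<le> (\<Sum>i\<in>J. ennreal (D^(m+4)) * emeasure mu (cball (x i) (r i)))"
    by simp
  also have "\<dots> = ennreal (D^(m+4)) * emeasure mu (\<Union>i\<in>J. cball (x i) (r i))"
    using disjoint \<open>finite J\<close>
    by (simp add: sum_distrib_left[symmetric] sum_emeasure disjoint_family_on_def sets_mu image_subset_iff)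
  also have "\<dots> \<le> ennreal (D^(m+4)) * emeasure mu (cball z t)"
    using inside by (intro mult_left_mono emeasure_mono) (auto simp: sets_mu)
  finally have "ennreal (real (card J) * bz) \<le> ennreal (D^(m+4) * bz)"
    using bz D_ge_1 by (simp add: ennreal_mult ennreal_of_nat_eq_real_of_nat)
  then show ?thesis
    using bz D_ge_1 by (simp add: ennreal_le_iff)
qed (use D_ge_1 in simp)

lemma sum_dyadic_integrals_same_scale_le:
  assumes "finite J"
    and near: "\<And>i. i \<in> J \<Longrightarrow> 0 < r i \<and> 8 * c * r i \<le> 1 \<and> dist (x i) (y i) \<le> c * r i \<and>
      4 * (c * r i) \<le> t \<and> t \<le> 8 * (c * r i)"
    and disjoint: "\<And>i j. i \<in> J \<Longrightarrow> j \<in> J \<Longrightarrow> i \<noteq> j \<Longrightarrow> cball (x i) (r i) \<inter> cball (x j) (r j) = {}"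
  shows "(\<Sum>i\<in>J. \<integral>\<^sup>+z. g z * indicator (cball (y i) (c * r i) \<inter> S) z \<partial>nu)
    \<le> ennreal (D^(m+4)) * (\<integral>\<^sup>+z\<in>S. g z \<partial>nu)"
proof (rule sum_nn_integral_indicator_le_overlap)
  fix z
  show "real (card {i\<in>J. z \<in> cball (y i) (c * r i) \<inter> S}) \<le> D^(m+4)"
  proof (rule card_disjoint_cballs_near_point)
    fix i assume "i \<in> {i\<in>J. z \<in> cball (y i) (c * r i) \<inter> S}"
    then show "0 < r i \<and> 8 * c * r i \<le> 1 \<and> dist (x i) z \<le> 2 * (c * r i) \<and>
        4 * (c * r i) \<le> t \<and> t \<le> 8 * (c * r i)"
      using near[of i] dist_triangle[of "x i" z "y i"] by auto
  qed (use assms in auto)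
qed (use assms D_ge_1 in auto)

lemma nice_family_osc_sum_le_dyadic_sum:
  assumes "\<theta> < p" "nice_family S c M x r" "\<forall>i<M. 8 * c * r i \<le> 1"
  shows "(\<Sum>i<M. emeasure mu (cball (x i) (r i)) / ennreal (r i powr p) *
            epow (osc nu f (cball (x i) (2 * c * r i))) p)
    \<le> ennreal (ball_term_const c p * D^(m+4)) *
       (\<Sum>k. ennreal (2 powr (real (Suc k) * (1 - \<theta>/p) * p)) *
          (\<integral>\<^sup>+ z\<in>S. epow (osc nu f (cball z (2 powr (- real (Suc k))))) p \<partial>nu))"
proof -
  obtain y k where yk: "\<And>i. i < M \<Longrightarrow> y i \<in> S \<and> dist (x i) (y i) \<le> c * r i \<and>
      4 * (c * r i) \<le> 2 powr - real (Suc (k i)) \<and> 2 powr - real (Suc (k i)) < 8 * (c * r i)"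
    using nice_family_dyadic_centres[OF assms(2,3) c_ge_1] by blast
  have ball: "0 < r i" "8 * c * r i \<le> 1" if "i < M" for i
    using assms(2,3) that by (auto simp: nice_family_def)
  define C where "C = ball_term_const c p"
  define N where "N = D^(m+4)"
  define w where "w q = ennreal (2 powr (real (Suc q) * (1 - \<theta>/p) * p))" for q
  define g where "g q z = epow (osc nu f (cball z (2 powr (- real (Suc q))))) p" for q z
  define I where "I i = (\<integral>\<^sup>+z. g (k i) z * indicator (cball (y i) (c * r i) \<inter> S) z \<partial>nu)" for i
  define G where "G q = (\<integral>\<^sup>+ z\<in>S. g q z \<partial>nu)" for q
  have "(\<Sum>i<M. emeasure mu (cball (x i) (r i)) / ennreal (r i powr p) *
            epow (osc nu f (cball (x i) (2 * c * r i))) p) \<le> (\<Sum>i<M. ennreal C * (w (k i) * I i))"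
  proof (rule sum_mono)
    fix i assume "i \<in> {..<M}"
    then have "i < M" by simp
    show "emeasure mu (cball (x i) (r i)) / ennreal (r i powr p) *
        epow (osc nu f (cball (x i) (2 * c * r i))) p \<le> ennreal C * (w (k i) * I i)"
      unfolding C_def w_def I_def g_def
      by (rule osc_summand_le_dyadic_integral[OF ball(1)[OF \<open>i < M\<close>] c_ge_1 assms(1) ball(2)[OF \<open>i < M\<close>]])
        (use yk[OF \<open>i < M\<close>] in auto)
  qed
  also have "\<dots> = ennreal C * (\<Sum>q\<in>k ` {..<M}. w q * (\<Sum>i\<in>{i\<in>{..<M}. k i = q}. I i))"
    by (simp add: sum_distrib_left[symmetric] sum_group_by_key)
  also have "\<dots> \<le> ennreal C * (\<Sum>q\<in>k ` {..<M}. w q * (ennreal N * G q))"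
  proof (intro mult_left_mono sum_mono)
    fix q
    have "(\<Sum>i\<in>{i\<in>{..<M}. k i = q}. I i) =
        (\<Sum>i\<in>{i\<in>{..<M}. k i = q}. \<integral>\<^sup>+z. g q z * indicator (cball (y i) (c * r i) \<inter> S) z \<partial>nu)"
      by (intro sum.cong) (auto simp: I_def)
    also have "\<dots> \<le> ennreal N * G q"
      unfolding G_def N_def
    proof (rule sum_dyadic_integrals_same_scale_le)
      fix i assume "i \<in> {i\<in>{..<M}. k i = q}"
      then show "0 < r i \<and> 8 * c * r i \<le> 1 \<and> dist (x i) (y i) \<le> c * r i \<and>
          4 * (c * r i) \<le> 2 powr - real (Suc q) \<and> 2 powr - real (Suc q) \<le> 8 * (c * r i)"
        using yk[of i] ball[of i] by auto
    qed (use assms(2) in \<open>auto simp: nice_family_def\<close>)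
    finally show "(\<Sum>i\<in>{i\<in>{..<M}. k i = q}. I i) \<le> ennreal N * G q" .
  qed auto
  also have "\<dots> = ennreal C * (ennreal N * (\<Sum>q\<in>k ` {..<M}. w q * G q))"
    by (simp add: sum_distrib_left ac_simps)
  also have "\<dots> \<le> ennreal C * (ennreal N * (\<Sum>q. w q * G q))"
    by (intro mult_left_mono sum_le_suminf) auto
  finally show ?thesis
    using less_imp_le[OF ball_term_const_pos[OF c_ge_1]] D_ge_1
    by (simp add: C_def N_def w_def G_def g_def ennreal_mult mult.assoc)
qed

end

end

section \<open>The restricted Hausdorff content\<close>

lemma sets_Hrestr [simp]: "sets (Hrestr mu \<theta> S) = sets borel"
  by (simp add: Hrestr_def sets_measure_of sets.sigma_sets_eq[of borel, simplified])

lemma emeasure_Hrestr: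
  "emeasure (Hrestr mu \<theta> S) A =
    (if A \<in> sets borel \<and> measure_space UNIV (sets borel) (\<lambda>B. Hcod mu \<theta> (B \<inter> S))
     then Hcod mu \<theta> (A \<inter> S) else 0)"
  unfolding Hrestr_def emeasure_measure_of_conv sets.sigma_sets_eq[of borel, simplified] by simp

text \<open>If \<open>H\<^sub>\<theta>\<close> restricted to \<open>S\<close> is not countably additive on Borel sets,
  \<open>measure_of\<close> returns the zero measure, so all mean oscillations vanish.\<close>
lemma osc_Hrestr_degenerate:
  "\<not> measure_space UNIV (sets borel) (\<lambda>B. Hcod mu \<theta> (B \<inter> S)) \<Longrightarrow> osc (Hrestr mu \<theta> S) f G = 0"
  by (simp add: osc_def emeasure_Hrestr)

lemma ADR_doubling_space_Hrestr:
  fixes mu :: "'a::polish_space measure"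
  assumes setting: "standing_setting mu p" and "S \<in> ADR mu \<theta>" "0 < \<theta>" "1 \<le> R"
    and additive: "measure_space UNIV (sets borel) (\<lambda>B. Hcod mu \<theta> (B \<inter> S))"
  obtains k1 k2 D where "ADR_doubling_space mu (Hrestr mu \<theta> S) \<theta> k1 k2 D R S"
proof -
  have sets_mu: "sets mu = sets borel"
    and locally_finite: "\<forall>x. \<exists>e>0. emeasure mu (cball x e) < \<infinity>"
    and pos: "\<forall>x. \<forall>r>0. emeasure mu (cball x r) > 0"
    and doubling: "\<forall>R>0. \<exists>C. \<forall>r. 0 < r \<and> r \<le> R \<longrightarrow>
        (\<forall>x. emeasure mu (cball x (2*r)) \<le> ennreal C * emeasure mu (cball x r))"
    using setting by (auto simp: standing_setting_def)
  have finite: "emeasure mu (cball x r) < \<infinity>" for x r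
    using sets_mu locally_finite doubling by (rule emeasure_cball_finite_if_doubling)
  obtain C where C: "\<And>r x. 0 < r \<Longrightarrow> r \<le> R \<Longrightarrow>
      emeasure mu (cball x (2*r)) \<le> ennreal C * emeasure mu (cball x r)"
    using doubling assms(4) by (meson less_le_trans zero_less_one)
  obtain k1 k2 where k: "k1 > 0" "k2 > 0" and bounds: "\<And>x r. x \<in> S \<Longrightarrow> 0 < r \<and> r \<le> 1 \<Longrightarrow>
      ennreal k1 * emeasure mu (cball x r) * ennreal (r powr -\<theta>) \<le> Hcod mu \<theta> (cball x r \<inter> S) \<and>
      Hcod mu \<theta> (cball x r \<inter> S) \<le> ennreal k2 * emeasure mu (cball x r) * ennreal (r powr -\<theta>)"
    and "closed S"
    using assms(2) unfolding ADR_def by blast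
  have nu_cball: "emeasure (Hrestr mu \<theta> S) (cball x r) = Hcod mu \<theta> (cball x r \<inter> S)" for x r
    using additive by (simp add: emeasure_Hrestr)
  show ?thesis
  proof (intro that[of k1 k2 "max C 1"] ADR_doubling_space.intro)
    fix x r :: real and y :: 'a
    assume "0 < r" "r \<le> R"
    then have "emeasure mu (cball y (2*r)) \<le> ennreal C * emeasure mu (cball y r)" by (rule C)
    also have "\<dots> \<le> ennreal (max C 1) * emeasure mu (cball y r)"
      by (intro mult_right_mono ennreal_leI) auto
    finally show "emeasure mu (cball y (2*r)) \<le> ennreal (max C 1) * emeasure mu (cball y r)" .
  next
    fix A :: "'a set" assume "A \<in> sets borel"
    then show "emeasure (Hrestr mu \<theta> S) (A \<inter> S) = emeasure (Hrestr mu \<theta> S) A"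
      using \<open>closed S\<close> by (simp add: emeasure_Hrestr Int_assoc)
  qed (use sets_mu finite pos k bounds nu_cball \<open>closed S\<close> assms(3,4) in auto)
qed

lemma besov_dyadic_sum_le_besov_norm:
  assumes "0 < p"
  shows "(\<Sum>k. ennreal (2 powr (real (Suc k) * s * p)) *
      (\<integral>\<^sup>+ x\<in>S. epow (osc (Hrestr mu \<theta> S) f (cball x (2 powr (- real (Suc k))))) p \<partial>Hrestr mu \<theta> S))
    \<le> epow (besov_norm mu \<theta> S s p f) p" (is "?sum \<le> _")
proof -
  have "?sum = epow (epow ?sum (1/p)) p" using assms by (simp add: epow_epow_inverse)
  also have "\<dots> \<le> epow (besov_norm mu \<theta> S s p f) p"
    using assms by (intro epow_mono) (auto simp: besov_norm_def)
  finally show ?thesis .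
qed

lemma nice_family_osc_sum_le_besov_norm:
  fixes mu :: "'a::polish_space measure"
  assumes "standing_setting mu p" "S \<in> ADR mu \<theta>" "0 < \<theta>" "\<theta> < p" "1 \<le> c"
  shows "\<exists>C>0. \<forall>M x r. nice_family S c M x r \<and> (\<forall>i<M. 8 * c * r i \<le> 1) \<longrightarrow>
    (\<forall>f. (\<Sum>i<M. emeasure mu (cball (x i) (r i)) / ennreal (r i powr p) *
              epow (osc (Hrestr mu \<theta> S) f (cball (x i) (2 * c * r i))) p)
         \<le> ennreal C * epow (besov_norm mu \<theta> S (1 - \<theta> / p) p f) p)"
proof (cases "measure_space UNIV (sets borel) (\<lambda>B. Hcod mu \<theta> (B \<inter> S))")
  case False
  then show ?thesis using assms(3,4) by (intro exI[of _ 1]) (simp add: osc_Hrestr_degenerate)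
next
  case True
  obtain m where "c \<le> 2^m" using real_arch_pow[of 2 c] by (auto intro: less_imp_le)
  moreover have "1 \<le> (2::real)^m" by simp
  ultimately obtain k1 k2 D where "ADR_doubling_space mu (Hrestr mu \<theta> S) \<theta> k1 k2 D (2^m) S"
    using ADR_doubling_space_Hrestr[OF assms(1-3) _ True] by blast
  then interpret ADR_doubling_space mu "Hrestr mu \<theta> S" \<theta> k1 k2 D "2^m" S .
  show ?thesis
  proof (intro exI[of _ "ball_term_const c p * D^(m+4)"] conjI allI impI)
    show "0 < ball_term_const c p * D^(m+4)"
      using ball_term_const_pos[OF assms(5)] D_ge_1 by simp
    fix M x r f
    assume "nice_family S c M x r \<and> (\<forall>i<M. 8 * c * r i \<le> 1)"
    then have family: "nice_family S c M x r" "\<forall>i<M. 8 * c * r i \<le> 1" by auto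
    have "0 < p" using assms(3,4) by simp
    show "(\<Sum>i<M. emeasure mu (cball (x i) (r i)) / ennreal (r i powr p) *
          epow (osc (Hrestr mu \<theta> S) f (cball (x i) (2 * c * r i))) p)
        \<le> ennreal (ball_term_const c p * D^(m+4)) * epow (besov_norm mu \<theta> S (1 - \<theta> / p) p f) p"
      using order_trans[OF nice_family_osc_sum_le_dyadic_sum[OF assms(5) \<open>c \<le> 2^m\<close> order_refl assms(4) family]
          mult_left_mono[OF besov_dyadic_sum_le_besov_norm[OF \<open>0 < p\<close>]]]
      by simp
  qed
qed

theorem lemma3p18:
  fixes mu :: "'a::polish_space measure" and p \<theta>2 :: real and S2 :: "'a set"
  assumes "standing_setting mu p"
    and "0 < \<theta>2" and "\<theta>2 < min p (Qlow mu)"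
    and "S2 \<in> ADR mu \<theta>2" and "closed S2"
  shows "\<forall>c\<ge>1. \<exists>C>0. \<forall>M x r. nice_family S2 c M x r \<and> (\<forall>i<M. 8 * c * r i \<le> 1) \<longrightarrow>
           (\<forall>f. in_Lp (Hrestr mu \<theta>2 S2) p f \<longrightarrow>
              (\<Sum>i<M. emeasure mu (cball (x i) (r i)) / ennreal (r i powr p) *
                  epow (osc (Hrestr mu \<theta>2 S2) f (cball (x i) (2 * c * r i))) p)
              \<le> ennreal C * epow (besov_norm mu \<theta>2 S2 (1 - \<theta>2 / p) p f) p)"
proof -
  have "\<theta>2 < p" using assms(3) by simp
  then show ?thesis
    using nice_family_osc_sum_le_besov_norm[OF assms(1,4,2)] by blast
qed

end
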